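(* For a finite word $\pi$ of distinct positive integers, let $\Psi(\pi)$ be the increasing binary tree defined recursively by: $\Psi(\emptyset)=\emptyset$; otherwise write $\pi=\sigma\,i\,\tau$ with $i$ the least letter of $\pi$, and let $\Psi(\pi)$ have root $i$ with left subtree $\Psi(\sigma)$ and right subtree $\Psi(\tau)$. Then $\Psi$ restricts to a bijection from the set $\mathrm{And}^I_n$ of André I permutations of $[n]$ onto the set $\mathcal{T}^I_n$ of André I trees on $[n]$, and to a bijection from the set $\mathrm{And}^{II}_n$ of André II permutations of $[n]$ onto the set $\mathcal{T}^{II}_n$ of André II trees on $[n]$. Moreover, for every such $\pi$ with $T=\Psi(\pi)$, $l(T)=\operatorname{des}(\pi)$ and $\operatorname{inv}(T)=\operatorname{inv}(\pi)$.
   Context: $[n]=\{1,\dots,n\}$. André permutations: the empty word and every single-letter word are both André I and André II permutations. A word $\sigma$ of $m\ge2$ distinct integers, written $\sigma=\tau\,\min(\sigma)\,\tau'$, is an André I permutation if $\tau$ and $\tau'$ are André I permutations and the maximum letter of $\tau\tau'$ lies in $\tau'$; it is an André II permutation if $\tau,\tau'$ are André II permutations and the minimum letter of $\tau\tau'$ lies in $\tau'$. For a permutation $\pi=\pi_1\cdots\pi_n$ with convention $\pi_0=\pi_{n+1}=0$, $\operatorname{des}(\pi)=\#\{0\le i\le n:\pi_i>\pi_{i+1}\}$ and $\operatorname{inv}(\pi)=\#\{(i,j):i<j,\ \pi_i>\pi_j\}$. An increasing binary tree on $[n]$ is a rooted tree on vertex set $[n]$, labels increasing along paths from the root, each vertex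 having at most a left child and at most a right child (distinguished). An André I tree is an increasing binary tree in which, for every vertex, the maximum label of its left subtree is smaller than that of its right subtree, whenever at least one is nonempty, with the maximum of an empty tree taken to be $0$. An André II tree is an increasing binary tree in which, for every vertex with at least one child, the minimum label of its left subtree is larger than that of its right subtree, the minimum of an empty tree taken to be $+\infty$. $l(T)$ is the number of leaves of $T$. An inversion of an increasing binary tree $T$ is a pair of vertices $(i,j)$ with $i>j$ such that either (1) $j$ lies to the right of the path from the root to $i$, i.e. $j$ belongs to the right subtree of some vertex $v$ of this path whose left child lies on the path; or (2) $j$ lies on the path from the root to $i$ and the left child of $j$ lies on this path. $\operatorname{inv}(T)$ is the number of inversions. *)

theory Defs
  imports Main "HOL-Library.Tree" "HOL-Library.Extended_Nat"
begin

inductive andreI :: "nat list \<Rightarrow> bool" where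
  andreI_Nil: "andreI []"
| andreI_single: "andreI [x]"
| andreI_split: "\<lbrakk> andreI \<tau>; andreI \<tau>'; distinct (\<tau> @ m # \<tau>'); \<tau> @ \<tau>' \<noteq> [];
                   \<forall>x\<in>set (\<tau> @ \<tau>'). m < x; Max (set (\<tau> @ \<tau>')) \<in> set \<tau>' \<rbrakk>
                 \<Longrightarrow> andreI (\<tau> @ m # \<tau>')"

inductive andreII :: "nat list \<Rightarrow> bool" where
  andreII_Nil: "andreII []"
| andreII_single: "andreII [x]"
| andreII_split: "\<lbrakk> andreII \<tau>; andreII \<tau>'; distinct (\<tau> @ m # \<tau>'); \<tau> @ \<tau>' \<noteq> [];
                   \<forall>x\<in>set (\<tau> @ \<tau>'). m < x; Min (set (\<tau> @ \<tau>')) \<in> set \<tau>' \<rbrakk>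
                 \<Longrightarrow> andreII (\<tau> @ m # \<tau>')"

definition perms :: "nat \<Rightarrow> nat list set" where
  "perms n = {w. distinct w \<and> set w = {1..n}}"

text \<open>Letter pi_i with the convention pi_0 = pi_(n+1) = 0 (1-based indexing).\<close>
definition ext_letter :: "nat list \<Rightarrow> nat \<Rightarrow> nat" where
  "ext_letter w i = (if 1 \<le> i \<and> i \<le> length w then w ! (i - 1) else 0)"

definition des :: "nat list \<Rightarrow> nat" where
  "des w = card {i. i \<le> length w \<and> ext_letter w i > ext_letter w (i + 1)}"

definition inv_word :: "nat list \<Rightarrow> nat" where
  "inv_word w = card {(i, j). i < j \<and> j < length w \<and> w ! i > w ! j}"

lemma takeWhile_length_less: "m \<in> set w \<Longrightarrow> length (takeWhile (\<lambda>x. x \<noteq> m) w) < length w"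
  by (induction w) auto

function psi :: "nat list \<Rightarrow> nat tree" where
  "psi [] = Leaf"
| "w \<noteq> [] \<Longrightarrow> psi w =
     (let m = Min (set w) in
      Node (psi (takeWhile (\<lambda>x. x \<noteq> m) w)) m (psi (tl (dropWhile (\<lambda>x. x \<noteq> m) w))))"
  by auto
termination
proof (relation "measure length")
  fix w :: "nat list" and m
  assume "w \<noteq> []" "m = Min (set w)"
  hence mem: "m \<in> set w" by simp
  show "(takeWhile (\<lambda>x. x \<noteq> m) w, w) \<in> measure length"
    using mem by (simp add: takeWhile_length_less)
  show "(tl (dropWhile (\<lambda>x. x \<noteq> m) w), w) \<in> measure length"
    using \<open>w \<noteq> []\<close> length_dropWhile_le[of "\<lambda>x. x \<noteq> m" w] by (cases w) auto
qed auto

fun inc_tree :: "nat tree \<Rightarrow> bool" where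
  "inc_tree Leaf = True"
| "inc_tree (Node l a r) = (inc_tree l \<and> inc_tree r \<and> (\<forall>x\<in>set_tree l \<union> set_tree r. a < x))"

definition tree_on :: "nat \<Rightarrow> nat tree \<Rightarrow> bool" where
  "tree_on n t = (inc_tree t \<and> size t = n \<and> set_tree t = {1..n})"

definition tmax :: "nat tree \<Rightarrow> nat" where
  "tmax t = (if t = Leaf then 0 else Max (set_tree t))"

definition tmin :: "nat tree \<Rightarrow> enat" where
  "tmin t = (if t = Leaf then \<infinity> else enat (Min (set_tree t)))"

fun andreI_tree :: "nat tree \<Rightarrow> bool" where
  "andreI_tree Leaf = True"
| "andreI_tree (Node l a r) = (andreI_tree l \<and> andreI_tree r \<and>
      ((l \<noteq> Leaf \<or> r \<noteq> Leaf) \<longrightarrow> tmax l < tmax r))"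

fun andreII_tree :: "nat tree \<Rightarrow> bool" where
  "andreII_tree Leaf = True"
| "andreII_tree (Node l a r) = (andreII_tree l \<and> andreII_tree r \<and>
      ((l \<noteq> Leaf \<or> r \<noteq> Leaf) \<longrightarrow> tmin l > tmin r))"

fun leaves :: "nat tree \<Rightarrow> nat" where
  "leaves Leaf = 0"
| "leaves (Node Leaf a Leaf) = 1"
| "leaves (Node l a r) = leaves l + leaves r"

fun node_at :: "'a tree \<Rightarrow> bool list \<Rightarrow> 'a option" where
  "node_at Leaf p = None"
| "node_at (Node l a r) [] = Some a"
| "node_at (Node l a r) (False # p) = node_at l p"
| "node_at (Node l a r) (True # p) = node_at r p"

text \<open>Inversions (i,j), i > j: writing the root-to-i position as p @ False # q
  (a vertex v at position p on the path whose left child is on the path), either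
  j lies in the right subtree of v (position p @ True # q'), or j = v.\<close>
definition inv_tree :: "nat tree \<Rightarrow> nat" where
  "inv_tree t = card {(i, j). j < i \<and> (\<exists>p q q'. node_at t (p @ False # q) = Some i \<and>
       (node_at t (p @ True # q') = Some j \<or> node_at t p = Some j))}"

end

theory Submission
  imports Defs
begin

text \<open>Splitting a word of distinct letters at its least letter is the same as splitting an
  increasing tree at its root, so \<open>psi\<close> inverts the inorder traversal on increasing trees,
  and the recursive definitions of Andre words and Andre trees correspond clause by clause.
  An inversion of a tree is exactly a pair of labels that are out of order in its inorder word.
  In the word \<open>w 0\<close> the descents start exactly at the leaves of \<open>psi w\<close> and at the vertices
  having a left but no right child; Andre trees have no such vertices.\<close>

lemma distinct_min_induct [consumes 1, case_names Nil split]: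
  fixes w :: "'a::linorder list"
  assumes "distinct w"
    and "P []"
    and "\<And>a m b. distinct (a @ m # b) \<Longrightarrow> \<forall>x\<in>set (a @ b). m < x \<Longrightarrow> P a \<Longrightarrow> P b
           \<Longrightarrow> P (a @ m # b)"
  shows "P w"
  using assms(1)
proof (induction "length w" arbitrary: w rule: less_induct)
  case less
  show ?case
  proof (cases "w = []")
    case True
    with assms(2) show ?thesis by simp
  next
    case False
    define m where "m = Min (set w)"
    have "m \<in> set w" using False by (simp add: m_def)
    then obtain a b where w: "w = a @ m # b" by (meson split_list)
    have "\<forall>x\<in>set (a @ b). m < x"
    proof
      fix x assume x: "x \<in> set (a @ b)"
      then have "x \<noteq> m" using less.prems w by auto
      moreover have "m \<le> x" unfolding m_def using x w by (intro Min_le) auto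
      ultimately show "m < x" by simp
    qed
    with less.prems have "P (a @ m # b)"
      by (intro assms(3) less.hyps) (auto simp: w)
    then show ?thesis by (simp add: w)
  qed
qed

lemma min_split_unique:
  fixes m m' :: "'a::order"
  assumes "distinct (a @ m # b)" "\<forall>x\<in>set (a @ b). m < x"
    and "a @ m # b = a' @ m' # b'" "\<forall>x\<in>set (a' @ b'). m' < x"
  shows "a' = a \<and> m' = m \<and> b' = b"
proof -
  have "m' = m"
  proof (rule ccontr)
    assume "m' \<noteq> m"
    then have "m' \<in> set (a @ b)" "m \<in> set (a' @ b')"
      using arg_cong[OF assms(3), of set] by auto
    with assms(2,4) have "m < m'" "m' < m" by blast+
    then show False by simp
  qed
  moreover have "m \<notin> set a" "m \<notin> set b" using assms(1) by auto
  ultimately show ?thesis using assms(3) by (simp add: append_Cons_eq_iff)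
qed

lemma psi_append_Cons:
  assumes "distinct (a @ m # b)" "\<forall>x\<in>set (a @ b). m < x"
  shows "psi (a @ m # b) = Node (psi a) m (psi b)"
proof -
  have "Min (set (a @ m # b)) = m"
    using assms(2) by (intro Min_eqI) (auto intro: less_imp_le)
  moreover have "takeWhile (\<lambda>x. x \<noteq> m) (a @ m # b) = a"
    using assms(1) by (subst takeWhile_append2) auto
  moreover have "dropWhile (\<lambda>x. x \<noteq> m) (a @ m # b) = m # b"
    using assms(1) by (subst dropWhile_append2) auto
  ultimately show ?thesis by (simp add: Let_def)
qed

lemma psi_eq_Leaf_iff [simp]: "psi w = Leaf \<longleftrightarrow> w = []"
  by (cases "w = []") (auto simp: Let_def)

declare psi.simps(2) [simp del]

lemma inorder_psi: "distinct w \<Longrightarrow> inorder (psi w) = w"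
  by (induction w rule: distinct_min_induct) (simp_all add: psi_append_Cons)

lemma set_tree_psi: "distinct w \<Longrightarrow> set_tree (psi w) = set w"
  by (metis inorder_psi set_inorder)

lemma inc_tree_psi: "distinct w \<Longrightarrow> inc_tree (psi w)"
  by (induction w rule: distinct_min_induct) (auto simp: psi_append_Cons set_tree_psi)

lemma psi_inorder: "inc_tree t \<Longrightarrow> distinct (inorder t) \<Longrightarrow> psi (inorder t) = t"
  by (induction t) (auto simp: psi_append_Cons)

lemma tree_on_psi:
  assumes "w \<in> perms n"
  shows "tree_on n (psi w)"
proof -
  from assms have "distinct w" "set w = {1..n}" by (simp_all add: perms_def)
  moreover from this have "size (psi w) = n"
    by (metis length_inorder inorder_psi distinct_card card_atLeastAtMost diff_Suc_1)
  ultimately show ?thesis by (simp add: tree_on_def inc_tree_psi set_tree_psi)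
qed

lemma inorder_in_perms: "tree_on n t \<Longrightarrow> inorder t \<in> perms n"
  unfolding perms_def tree_on_def by (auto intro: card_distinct)

lemma bij_betw_psi:
  assumes "\<And>w. distinct w \<Longrightarrow> P (psi w) \<longleftrightarrow> Q w"
  shows "bij_betw psi {w \<in> perms n. Q w} {t. tree_on n t \<and> P t}"
proof (rule bij_betw_byWitness[where f' = inorder])
  have distinct: "distinct w" if "w \<in> perms n" for w
    using that by (simp add: perms_def)
  have tree_on_inc: "inc_tree t" if "tree_on n t" for t
    using that by (simp add: tree_on_def)
  show "\<forall>w\<in>{w \<in> perms n. Q w}. inorder (psi w) = w"
    by (auto simp: inorder_psi distinct)
  show "\<forall>t\<in>{t. tree_on n t \<and> P t}. psi (inorder t) = t"
    by (auto simp: psi_inorder tree_on_inc distinct inorder_in_perms)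
  show "psi ` {w \<in> perms n. Q w} \<subseteq> {t. tree_on n t \<and> P t}"
    using assms by (auto simp: tree_on_psi distinct)
  show "inorder ` {t. tree_on n t \<and> P t} \<subseteq> {w \<in> perms n. Q w}"
  proof
    fix w assume "w \<in> inorder ` {t. tree_on n t \<and> P t}"
    then obtain t where "tree_on n t" "P t" "w = inorder t" by blast
    then show "w \<in> {w \<in> perms n. Q w}"
      using assms[of w] by (simp add: inorder_in_perms psi_inorder tree_on_inc distinct)
  qed
qed

lemma andreI_append_Cons_iff:
  assumes "distinct (a @ m # b)" "\<forall>x\<in>set (a @ b). m < x"
  shows "andreI (a @ m # b) \<longleftrightarrow>
    andreI a \<and> andreI b \<and> (a @ b \<noteq> [] \<longrightarrow> Max (set (a @ b)) \<in> set b)"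
proof
  assume "andreI (a @ m # b)"
  then show "andreI a \<and> andreI b \<and> (a @ b \<noteq> [] \<longrightarrow> Max (set (a @ b)) \<in> set b)"
  proof cases
    case andreI_single
    then show ?thesis by (simp add: append_eq_Cons_conv andreI_Nil)
  next
    case (andreI_split \<tau> \<tau>' m')
    with min_split_unique[OF assms] show ?thesis by metis
  qed simp
next
  assume "andreI a \<and> andreI b \<and> (a @ b \<noteq> [] \<longrightarrow> Max (set (a @ b)) \<in> set b)"
  with assms show "andreI (a @ m # b)"
    by (cases "a @ b = []") (auto intro: andreI_single andreI_split)
qed

lemma andreII_append_Cons_iff:
  assumes "distinct (a @ m # b)" "\<forall>x\<in>set (a @ b). m < x"
  shows "andreII (a @ m # b) \<longleftrightarrow>
    andreII a \<and> andreII b \<and> (a @ b \<noteq> [] \<longrightarrow> Min (set (a @ b)) \<in> set b)"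
proof
  assume "andreII (a @ m # b)"
  then show "andreII a \<and> andreII b \<and> (a @ b \<noteq> [] \<longrightarrow> Min (set (a @ b)) \<in> set b)"
  proof cases
    case andreII_single
    then show ?thesis by (simp add: append_eq_Cons_conv andreII_Nil)
  next
    case (andreII_split \<tau> \<tau>' m')
    with min_split_unique[OF assms] show ?thesis by metis
  qed simp
next
  assume "andreII a \<and> andreII b \<and> (a @ b \<noteq> [] \<longrightarrow> Min (set (a @ b)) \<in> set b)"
  with assms show "andreII (a @ m # b)"
    by (cases "a @ b = []") (auto intro: andreII_single andreII_split)
qed

lemma tmax_less_tmax_iff:
  assumes "set_tree l \<inter> set_tree r = {}"
    and "0 \<notin> set_tree r" \<comment> \<open>\<open>tmax Leaf = 0\<close>\<close>
    and "l \<noteq> Leaf \<or> r \<noteq> Leaf"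
  shows "tmax l < tmax r \<longleftrightarrow> Max (set_tree l \<union> set_tree r) \<in> set_tree r"
proof (cases "l = Leaf \<or> r = Leaf")
  case True
  with assms(2,3) show ?thesis
    by (auto simp: tmax_def) (metis Max_in finite_set_tree gr0I eq_set_tree_empty)
next
  case False
  let ?L = "Max (set_tree l)" and ?R = "Max (set_tree r)"
  have "?L \<in> set_tree l" "?R \<in> set_tree r" using False by auto
  moreover have "Max (set_tree l \<union> set_tree r) = max ?L ?R" using False by (simp add: Max_Un)
  moreover have "tmax l < tmax r \<longleftrightarrow> ?L < ?R" using False by (simp add: tmax_def)
  moreover have "max x y \<in> B \<longleftrightarrow> x < y" if "x \<in> A" "y \<in> B" "A \<inter> B = {}"
    for x y :: nat and A B
    using that by (auto simp: max_def)
  ultimately show ?thesis using assms(1) by presburger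
qed

lemma tmin_less_tmin_iff:
  assumes "set_tree l \<inter> set_tree r = {}" "l \<noteq> Leaf \<or> r \<noteq> Leaf"
  shows "tmin r < tmin l \<longleftrightarrow> Min (set_tree l \<union> set_tree r) \<in> set_tree r"
proof (cases "l = Leaf \<or> r = Leaf")
  case True
  with assms(2) show ?thesis by (auto simp: tmin_def)
next
  case False
  let ?L = "Min (set_tree l)" and ?R = "Min (set_tree r)"
  have "?L \<in> set_tree l" "?R \<in> set_tree r" using False by auto
  moreover have "Min (set_tree l \<union> set_tree r) = min ?L ?R" using False by (simp add: Min_Un)
  moreover have "tmin r < tmin l \<longleftrightarrow> ?R < ?L" using False by (simp add: tmin_def)
  moreover have "min x y \<in> B \<longleftrightarrow> y < x" if "x \<in> A" "y \<in> B" "A \<inter> B = {}"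
    for x y :: nat and A B
    using that by (auto simp: min_def)
  ultimately show ?thesis using assms(1) by presburger
qed

lemma andreI_tree_psi_iff: "distinct w \<Longrightarrow> andreI_tree (psi w) \<longleftrightarrow> andreI w"
proof (induction w rule: distinct_min_induct)
  case (split a m b)
  have "0 \<notin> set b" using split.hyps(2) by auto
  with split show ?case
    by (simp add: psi_append_Cons andreI_append_Cons_iff tmax_less_tmax_iff set_tree_psi)
qed (simp add: andreI_Nil)

lemma andreII_tree_psi_iff: "distinct w \<Longrightarrow> andreII_tree (psi w) \<longleftrightarrow> andreII w"
proof (induction w rule: distinct_min_induct)
  case (split a m b)
  then show ?case
    by (simp add: psi_append_Cons andreII_append_Cons_iff tmin_less_tmin_iff set_tree_psi)
qed (simp add: andreII_Nil)

fun adj_descents :: "'a::linorder list \<Rightarrow> nat" where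
  "adj_descents (x # y # xs) = (if y < x then 1 else 0) + adj_descents (y # xs)"
| "adj_descents _ = 0"

lemma adj_descents_append_Cons:
  "adj_descents (xs @ x # ys) = adj_descents (xs @ [x]) + adj_descents (x # ys)"
  by (induction xs rule: adj_descents.induct) auto

lemma adj_descents_conv_card:
  "adj_descents xs = card {i. Suc i < length xs \<and> xs ! Suc i < xs ! i}"
proof (induction xs rule: adj_descents.induct)
  case (1 x y xs)
  let ?D = "{i. Suc i < length (y # xs) \<and> (y # xs) ! Suc i < (y # xs) ! i}"
  have "{i. Suc i < length (x # y # xs) \<and> (x # y # xs) ! Suc i < (x # y # xs) ! i}
      = {i. i = 0 \<and> y < x} \<union> Suc ` ?D"
  proof (intro set_eqI iffI)
    fix i assume "i \<in> {i. Suc i < length (x # y # xs) \<and> (x # y # xs) ! Suc i < (x # y # xs) ! i}"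
    then show "i \<in> {i. i = 0 \<and> y < x} \<union> Suc ` ?D" by (cases i) auto
  qed auto
  moreover have "finite ?D" by (rule finite_subset[of _ "{..<length (y # xs)}"]) auto
  ultimately show ?case using "1.IH" by (simp add: card_image)
qed simp_all

lemma des_eq_adj_descents: "des w = adj_descents (w @ [0])"
proof -
  have "ext_letter w i = (0 # w @ [0]) ! i" if "i \<le> Suc (length w)" for i
    using that by (cases i) (auto simp: ext_letter_def nth_append)
  then have "des w = adj_descents (0 # w @ [0])"
    unfolding des_def adj_descents_conv_card
    by (intro arg_cong[where f = card]) (auto simp del: nth_Cons_Suc)
  also have "\<dots> = adj_descents (w @ [0])"
    by (cases "w @ [0]" rule: adj_descents.cases) auto
  finally show ?thesis .
qed

fun lchild_imp_rchild :: "'a tree \<Rightarrow> bool" where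
  "lchild_imp_rchild Leaf = True"
| "lchild_imp_rchild (Node l a r) =
    (lchild_imp_rchild l \<and> lchild_imp_rchild r \<and> (l \<noteq> Leaf \<longrightarrow> r \<noteq> Leaf))"

lemma leaves_eq_adj_descents:
  "inc_tree t \<Longrightarrow> lchild_imp_rchild t \<Longrightarrow> \<forall>x\<in>set_tree t. c < x
    \<Longrightarrow> leaves t = adj_descents (inorder t @ [c])"
proof (induction t arbitrary: c)
  case (Node l a r)
  have "adj_descents (inorder (Node l a r) @ [c])
      = adj_descents (inorder l @ [a]) + adj_descents (a # inorder r @ [c])"
    using adj_descents_append_Cons[of "inorder l" a "inorder r @ [c]"] by simp
  also have "adj_descents (inorder l @ [a]) = leaves l"
    using Node.IH(1)[of a] Node.prems by simp
  also have "adj_descents (a # inorder r @ [c]) = (if r = Leaf then 1 else leaves r)"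
  proof (cases "inorder r")
    case (Cons y ys)
    then have "y \<in> set_tree r" by (metis list.set_intros(1) set_inorder)
    then have "a < y" using Node.prems(1) by simp
    moreover have "adj_descents (inorder r @ [c]) = leaves r"
      using Node.IH(2)[of c] Node.prems by simp
    ultimately show ?thesis using Cons by auto
  qed (use Node.prems in simp)
  finally show ?case using Node.prems(2) by (cases l; cases r) simp_all
qed simp

lemma lchild_imp_rchild_if_andreI_tree: "andreI_tree t \<Longrightarrow> lchild_imp_rchild t"
  by (induction t) (auto simp: tmax_def)

lemma lchild_imp_rchild_if_andreII_tree: "andreII_tree t \<Longrightarrow> lchild_imp_rchild t"
  by (induction t) (auto simp: tmin_def)

fun inversions :: "'a::linorder list \<Rightarrow> ('a \<times> 'a) set" where
  "inversions [] = {}"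
| "inversions (x # xs) = Pair x ` {y \<in> set xs. y < x} \<union> inversions xs"

lemma inversions_append:
  "inversions (xs @ ys) = inversions xs \<union> inversions ys \<union> {(x, y). x \<in> set xs \<and> y \<in> set ys \<and> y < x}"
  by (induction xs) auto

lemma inversions_conv_nth:
  "inversions w = (\<lambda>(i, j). (w ! i, w ! j)) ` {(i, j). i < j \<and> j < length w \<and> w ! j < w ! i}"
proof (induction w)
  case (Cons x xs)
  show ?case
  proof (intro set_eqI iffI)
    fix p assume "p \<in> inversions (x # xs)"
    then show "p \<in> (\<lambda>(i, j). ((x # xs) ! i, (x # xs) ! j)) `
        {(i, j). i < j \<and> j < length (x # xs) \<and> (x # xs) ! j < (x # xs) ! i}"
      unfolding inversions.simps Cons.IH
      by (force simp: in_set_conv_nth image_iff)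
  next
    fix p assume "p \<in> (\<lambda>(i, j). ((x # xs) ! i, (x # xs) ! j)) `
        {(i, j). i < j \<and> j < length (x # xs) \<and> (x # xs) ! j < (x # xs) ! i}"
    then obtain i j where "p = ((x # xs) ! i, (x # xs) ! j)" "i < j" "j < length (x # xs)"
      "(x # xs) ! j < (x # xs) ! i" by auto
    then show "p \<in> inversions (x # xs)"
      unfolding inversions.simps Cons.IH
      by (cases i; cases j) (auto simp: image_iff)
  qed
qed simp

lemma card_inversions: "distinct w \<Longrightarrow> card (inversions w) = inv_word w"
  unfolding inversions_conv_nth inv_word_def
  by (rule card_image) (auto simp: inj_on_def nth_eq_iff_index_eq)

lemma ex_node_at_iff: "(\<exists>p. node_at t p = Some x) \<longleftrightarrow> x \<in> set_tree t"
proof (induction t)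
  case (Node l a r)
  have "(\<exists>p. node_at (Node l a r) p = Some x) \<longleftrightarrow>
      node_at (Node l a r) [] = Some x \<or> (\<exists>p. node_at (Node l a r) (False # p) = Some x)
      \<or> (\<exists>p. node_at (Node l a r) (True # p) = Some x)"
    by (metis (full_types) list.exhaust)
  with Node.IH show ?case by auto
qed simp

definition tree_inversions :: "'a::linorder tree \<Rightarrow> ('a \<times> 'a) set" where
  "tree_inversions t = {(i, j). j < i \<and> (\<exists>p q q'. node_at t (p @ False # q) = Some i \<and>
       (node_at t (p @ True # q') = Some j \<or> node_at t p = Some j))}"

lemma inv_tree_eq_card: "inv_tree t = card (tree_inversions t)"
  by (simp add: inv_tree_def tree_inversions_def)

lemma tree_inversions_Leaf [simp]: "tree_inversions Leaf = {}"
  by (simp add: tree_inversions_def)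

lemma tree_inversions_Node:
  "tree_inversions (Node l m r) =
    {(i, j). j < i \<and> i \<in> set_tree l \<and> j \<in> insert m (set_tree r)}
    \<union> tree_inversions l \<union> tree_inversions r"
proof -
  have ex_path: "(\<exists>p q q'. P p q q') \<longleftrightarrow>
      (\<exists>q q'. P [] q q') \<or> (\<exists>p q q'. P (False # p) q q') \<or> (\<exists>p q q'. P (True # p) q q')"
    for P :: "bool list \<Rightarrow> bool list \<Rightarrow> bool list \<Rightarrow> bool"
    by (metis (full_types) list.exhaust)
  show ?thesis
    unfolding tree_inversions_def
    by (subst ex_path) (auto simp flip: ex_node_at_iff)
qed

lemma tree_inversions_eq_inversions:
  "inc_tree t \<Longrightarrow> tree_inversions t = inversions (inorder t)"
proof (induction t)
  case (Node l m r)
  then have "\<forall>x\<in>set_tree r. m < x" by simp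
  then have "inversions (m # inorder r) = inversions (inorder r)" by auto
  with Node show ?case by (auto simp: tree_inversions_Node inversions_append)
qed simp

theorem proposition6p4:
  fixes n :: nat
  shows "bij_betw psi {w \<in> perms n. andreI w} {t. tree_on n t \<and> andreI_tree t}
       \<and> bij_betw psi {w \<in> perms n. andreII w} {t. tree_on n t \<and> andreII_tree t}
       \<and> (\<forall>w \<in> perms n. andreI w \<or> andreII w \<longrightarrow>
             leaves (psi w) = des w \<and> inv_tree (psi w) = inv_word w)"
proof (intro conjI ballI impI)
  show "bij_betw psi {w \<in> perms n. andreI w} {t. tree_on n t \<and> andreI_tree t}"
    by (rule bij_betw_psi) (rule andreI_tree_psi_iff)
  show "bij_betw psi {w \<in> perms n. andreII w} {t. tree_on n t \<and> andreII_tree t}"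
    by (rule bij_betw_psi) (rule andreII_tree_psi_iff)
next
  fix w assume w: "w \<in> perms n" and andre: "andreI w \<or> andreII w"
  have distinct: "distinct w" and positive: "\<forall>x\<in>set w. 0 < x"
    using w by (auto simp: perms_def)
  have "lchild_imp_rchild (psi w)"
    using andre lchild_imp_rchild_if_andreI_tree lchild_imp_rchild_if_andreII_tree
    by (auto simp: andreI_tree_psi_iff andreII_tree_psi_iff distinct)
  then have "leaves (psi w) = adj_descents (w @ [0])"
    using leaves_eq_adj_descents[of "psi w" 0] positive
    by (simp add: inc_tree_psi inorder_psi set_tree_psi distinct)
  then show "leaves (psi w) = des w"
    by (simp add: des_eq_adj_descents)
  have "inv_tree (psi w) = card (inversions w)"
    by (simp add: inv_tree_eq_card tree_inversions_eq_inversions inc_tree_psi inorder_psi distinct)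
  then show "inv_tree (psi w) = inv_word w"
    by (simp add: card_inversions distinct)
qed

end
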